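(* Let $q'>0$, $e'\in(0,1)$, $q_{\max}>0$. There is no $(q,\omega)\in\mathcal D_2$ such that the orbits are linked for every $(e,\omega')\in\mathcal D_1$.
   Context: For $q>0$, $e\in[0,1]$ and angles $\omega,\omega'$, define $r_{\pm}=\frac{q(1+e)}{1\pm e\cos\omega}$, $r'_{\pm}=\frac{q'(1+e')}{1\pm e'\cos\omega'}$ (extended-real values allowed), $d^+=r'_+-r_+$, $d^-=r'_--r_-$. Linked orbits means $d^+<0<d^-$ or $d^-<0<d^+$. $\mathcal D_1=\{(e,\omega'):0\le e\le1,\ 0\le\omega'\le\pi\}$, $\mathcal D_2=\{(q,\omega):0<q\le q_{\max},\ 0\le\omega\le\pi/2\}$. *)

theory Defs
  imports "HOL-Analysis.Analysis" "HOL-Library.Extended_Real"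
begin

text \<open>Pericentre/apocentre-type distances along the nodal line, with values in the
extended reals: a vanishing denominator (only possible for e = 1) gives +infinity.\<close>

definition r_plus :: "real \<Rightarrow> real \<Rightarrow> real \<Rightarrow> ereal" where
  "r_plus q e \<omega> = (if 1 + e * cos \<omega> = 0 then \<infinity>
                      else ereal (q * (1 + e) / (1 + e * cos \<omega>)))"

definition r_minus :: "real \<Rightarrow> real \<Rightarrow> real \<Rightarrow> ereal" where
  "r_minus q e \<omega> = (if 1 - e * cos \<omega> = 0 then \<infinity>
                       else ereal (q * (1 + e) / (1 - e * cos \<omega>)))"

definition d_plus :: "real \<Rightarrow> real \<Rightarrow> real \<Rightarrow> real \<Rightarrow> real \<Rightarrow> real \<Rightarrow> ereal" where
  "d_plus q e \<omega> q' e' \<omega>' = r_plus q' e' \<omega>' - r_plus q e \<omega>"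

definition d_minus :: "real \<Rightarrow> real \<Rightarrow> real \<Rightarrow> real \<Rightarrow> real \<Rightarrow> real \<Rightarrow> ereal" where
  "d_minus q e \<omega> q' e' \<omega>' = r_minus q' e' \<omega>' - r_minus q e \<omega>"

definition linked :: "real \<Rightarrow> real \<Rightarrow> real \<Rightarrow> real \<Rightarrow> real \<Rightarrow> real \<Rightarrow> bool" where
  "linked q e \<omega> q' e' \<omega>' \<longleftrightarrow>
     (d_plus q e \<omega> q' e' \<omega>' < 0 \<and> 0 < d_minus q e \<omega> q' e' \<omega>') \<or>
     (d_minus q e \<omega> q' e' \<omega>' < 0 \<and> 0 < d_plus q e \<omega> q' e' \<omega>')"

definition D1 :: "(real \<times> real) set" where
  "D1 = {(e, \<omega>'). 0 \<le> e \<and> e \<le> 1 \<and> 0 \<le> \<omega>' \<and> \<omega>' \<le> pi}"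

definition D2 :: "real \<Rightarrow> (real \<times> real) set" where
  "D2 qmax = {(q, \<omega>). 0 < q \<and> q \<le> qmax \<and> 0 \<le> \<omega> \<and> \<omega> \<le> pi / 2}"

end

theory Submission
  imports Defs
begin

text \<open>A circular orbit (e = 0) and an orbit whose nodal line is perpendicular to its
apsidal line (cos \<omega>' = 0) both cross the nodal line at the same distance on either side,
so d^+ = d^- and the two distances cannot have opposite signs. The pair
(e, \<omega>') = (0, pi/2) lies in D1 whatever (q, \<omega>) is.\<close>

lemma r_plus_eq_r_minus_if_cos_zero:
  assumes "cos \<omega> = 0"
  shows "r_plus q e \<omega> = r_minus q e \<omega>"
  using assms unfolding r_plus_def r_minus_def by simp

lemma r_plus_eq_r_minus_circular: "r_plus q 0 \<omega> = r_minus q 0 \<omega>"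
  unfolding r_plus_def r_minus_def by simp

lemma d_plus_eq_d_minus:
  assumes "cos \<omega>' = 0"
  shows "d_plus q 0 \<omega> q' e' \<omega>' = d_minus q 0 \<omega> q' e' \<omega>'"
  unfolding d_plus_def d_minus_def
  by (simp add: r_plus_eq_r_minus_circular r_plus_eq_r_minus_if_cos_zero[OF assms])

lemma not_linked_if_d_plus_eq_d_minus:
  assumes "d_plus q e \<omega> q' e' \<omega>' = d_minus q e \<omega> q' e' \<omega>'"
  shows "\<not> linked q e \<omega> q' e' \<omega>'"
  using assms unfolding linked_def by auto

theorem mainTheorem7:
  fixes q' e' qmax :: real
  assumes "q' > 0" and "0 < e'" and "e' < 1" and "qmax > 0"
  shows "\<not> (\<exists>(q, \<omega>) \<in> D2 qmax. \<forall>(e, \<omega>') \<in> D1. linked q e \<omega> q' e' \<omega>')"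
proof
  assume "\<exists>(q, \<omega>) \<in> D2 qmax. \<forall>(e, \<omega>') \<in> D1. linked q e \<omega> q' e' \<omega>'"
  then obtain q \<omega> where all_linked: "\<forall>(e, \<omega>') \<in> D1. linked q e \<omega> q' e' \<omega>'"
    by auto
  have "(0, pi / 2) \<in> D1"
    unfolding D1_def by auto
  with all_linked have "linked q 0 \<omega> q' e' (pi / 2)"
    by auto
  moreover have "\<not> linked q 0 \<omega> q' e' (pi / 2)"
    by (simp add: not_linked_if_d_plus_eq_d_minus d_plus_eq_d_minus)
  ultimately show False
    by contradiction
qed

end
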